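(* A family of structures $\mathfrak{K}=\{\mathcal{A}_i:i\in\mathbb{N}\}$ is $\mathbf{Fin}$-learnable if and only if it is $=_{\mathbb{N}}$-learnable.
   Context: All structures are countable, have domain $\mathbb{N}$, are in a finite relational signature, and are identified with their atomic diagrams (elements of $2^{\mathbb{N}}$ via a fixed Gödel numbering). A family of structures $\mathfrak{K}$ is a countable set of pairwise nonisomorphic such structures. For a structure $\mathcal{S}$ and $s\in\mathbb{N}$, $\mathcal{S}\restriction_s$ denotes the finite substructure with domain $\{0,\dots,s\}$. The learning domain $\mathrm{LD}(\mathfrak{K})\subseteq 2^{\mathbb{N}}$ is the set of all structures with domain $\mathbb{N}$ isomorphic to some member of $\mathfrak{K}$, with the subspace topology of Cantor space. The hypothesis space is $\{\ulcorner\mathcal{A}\urcorner:\mathcal{A}\in\mathfrak{K}\}\cup\{?\}$ (pairwise distinct formal symbols). A learner is an arbitrary function $\mathbf{M}$ from $\{\mathcal{S}\restriction_s:\mathcal{S}\in\mathrm{LD}(\mathfrak{K}),s\in\mathbb{N}\}$ to the hypothesis space. $\mathfrak{K}$ is $\mathbf{Fin}$-learnable if there is a learner $\mathbf{M}$ such that for every $\mathcal{S}\in\mathrm{LD}(\mathfrak{K})$ there is $s_0$ with $\mathbf{M}(\mathcal{S}\restriction_t)=?$ for all $t<s_0$ and $\mathbf{M}(\mathcal{S}\restriction_t)=\ulcorner\mathcal{A}\urcorner$ for all $t\geq s_0$, where $\mathcal{A}\in\mathfrak{K}$ is isomorphic to $\mathcal{S}$. For an equivalence relation $E$ on a space $X$,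 $\mathfrak{K}$ is $E$-learnable if there is a continuous function $\Gamma:\mathrm{LD}(\mathfrak{K})\to X$ such that for all $\mathcal{S},\mathcal{S}'\in\mathrm{LD}(\mathfrak{K})$: $\mathcal{S}\cong\mathcal{S}'\iff\Gamma(\mathcal{S})\,E\,\Gamma(\mathcal{S}')$. Here $=_{\mathbb{N}}$ is equality on $\mathbb{N}$ with the discrete topology. *)

theory Defs
  imports "HOL-Analysis.Analysis" "HOL-Library.Countable"
begin

text \<open>A finite relational signature is a list of arities: relation symbol i (for i < length sig)
  has arity sig ! i.  A structure with domain the natural numbers is given by the
  interpretations of its relation symbols: S i xs says that tuple xs lies in the relation R_i.\<close>

type_synonym str = "nat \<Rightarrow> nat list \<Rightarrow> bool"

definition is_str :: "nat list \<Rightarrow> str \<Rightarrow> bool" where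
  "is_str sig S \<longleftrightarrow> (\<forall>i xs. S i xs \<longrightarrow> i < length sig \<and> length xs = sig ! i)"

definition iso :: "str \<Rightarrow> str \<Rightarrow> bool" where
  "iso S T \<longleftrightarrow> (\<exists>f. bij f \<and> (\<forall>i xs. S i xs \<longleftrightarrow> T i (map f xs)))"

datatype atom = AEq nat nat | ARel nat "nat list"

instance atom :: countable by countable_datatype

definition is_atom :: "nat list \<Rightarrow> atom \<Rightarrow> bool" where
  "is_atom sig a = (case a of AEq x y \<Rightarrow> True
                    | ARel i xs \<Rightarrow> i < length sig \<and> length xs = sig ! i)"

fun holds :: "str \<Rightarrow> atom \<Rightarrow> bool" where
  "holds S (AEq x y) = (x = y)"
| "holds S (ARel i xs) = S i xs"

text \<open>The atomic diagram of S as an element of Cantor space 2^N: bit n is the truth value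
  of the atomic sentence with Goedel number n (from_nat is onto the atoms).\<close>
definition diag :: "nat list \<Rightarrow> str \<Rightarrow> (nat \<Rightarrow> bool)" where
  "diag sig S n = (is_atom sig (from_nat n) \<and> holds S (from_nat n))"

definition cantor :: "(nat \<Rightarrow> bool) topology" where
  "cantor = product_topology (\<lambda>_. discrete_topology UNIV) UNIV"

definition family :: "nat list \<Rightarrow> str set \<Rightarrow> bool" where
  "family sig K \<longleftrightarrow> countable K \<and> (\<forall>A\<in>K. is_str sig A)
     \<and> (\<forall>A\<in>K. \<forall>B\<in>K. iso A B \<longrightarrow> A = B)"

definition LD :: "nat list \<Rightarrow> str set \<Rightarrow> str set" where
  "LD sig K = {S. is_str sig S \<and> (\<exists>A\<in>K. iso A S)}"

definition restr :: "str \<Rightarrow> nat \<Rightarrow> nat \<times> str" where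
  "restr S s = (s, \<lambda>i xs. S i xs \<and> (\<forall>x\<in>set xs. x \<le> s))"

text \<open>Hypotheses: None is ?, Some A is the code of A \<in> K.\<close>
definition Fin_learnable :: "nat list \<Rightarrow> str set \<Rightarrow> bool" where
  "Fin_learnable sig K \<longleftrightarrow>
     (\<exists>M :: nat \<times> str \<Rightarrow> str option.
        (\<forall>s S. S \<in> LD sig K \<longrightarrow> M (restr S s) = None \<or> (\<exists>A\<in>K. M (restr S s) = Some A)) \<and>
        (\<forall>S \<in> LD sig K. \<exists>s0. (\<forall>t<s0. M (restr S t) = None) \<and>
            (\<exists>A\<in>K. iso A S \<and> (\<forall>t\<ge>s0. M (restr S t) = Some A))))"

definition eqN_learnable :: "nat list \<Rightarrow> str set \<Rightarrow> bool" where
  "eqN_learnable sig K \<longleftrightarrow>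
     (\<exists>\<Gamma> :: (nat \<Rightarrow> bool) \<Rightarrow> nat.
        continuous_map (subtopology cantor (diag sig ` LD sig K)) (discrete_topology UNIV) \<Gamma> \<and>
        (\<forall>S\<in>LD sig K. \<forall>S'\<in>LD sig K. iso S S' \<longleftrightarrow> \<Gamma> (diag sig S) = \<Gamma> (diag sig S')))"

end

theory Submission imports Defs begin

text \<open>Basic open sets of Cantor space fix finitely many bits of a diagram, and the bits of
  the diagram of S that mention only parameters \<open>\<le> s\<close> are exactly the finite
  substructure \<open>restr S s\<close>.  So \<open>\<Gamma>\<close> is continuous iff every structure has a finite
  substructure on which \<open>\<Gamma>\<close> is constant.  A Fin-learner yields such a \<open>\<Gamma>\<close>: once it
  leaves ?, its guess is final and correct, so it is the same for every structure sharing
  that finite part; take \<open>\<Gamma>\<close> to be the index of the isomorphism type.  Conversely, if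
  \<open>\<Gamma>\<close> is continuous and classifies isomorphism, every structure has a finite substructure
  all of whose extensions in the learning domain are isomorphic to it; the learner outputs
  A as soon as the data seen so far force A.\<close>

lemma continuous_map_cantor_discrete_iff:
  fixes G :: "(nat \<Rightarrow> bool) \<Rightarrow> 'b"
  shows "continuous_map (subtopology cantor D) (discrete_topology UNIV) G \<longleftrightarrow>
    (\<forall>d\<in>D. \<exists>F. finite F \<and> (\<forall>e\<in>D. (\<forall>n\<in>F. e n = d n) \<longrightarrow> G e = G d))"
proof
  assume cont: "continuous_map (subtopology cantor D) (discrete_topology UNIV) G"
  have tops: "topspace (subtopology cantor D) = D" by (simp add: cantor_def)
  show "\<forall>d\<in>D. \<exists>F. finite F \<and> (\<forall>e\<in>D. (\<forall>n\<in>F. e n = d n) \<longrightarrow> G e = G d)"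
  proof
    fix d assume d: "d \<in> D"
    have "openin (subtopology cantor D) {x \<in> D. G x \<in> {G d}}"
      using cont tops unfolding continuous_map_def by (metis openin_discrete_topology subset_UNIV)
    then obtain U where U: "openin cantor U" "{x \<in> D. G x = G d} = U \<inter> D"
      by (auto simp: openin_subtopology)
    then have "d \<in> U" using d by blast
    then obtain V where V: "finite {i. V i \<noteq> UNIV}" "d \<in> Pi\<^sub>E UNIV V" "Pi\<^sub>E UNIV V \<subseteq> U"
      using U(1) unfolding cantor_def openin_product_topology_alt by fastforce
    have "G e = G d" if "e \<in> D" "\<forall>n\<in>{i. V i \<noteq> UNIV}. e n = d n" for e
    proof -
      have "e i \<in> V i" for i
        using that(2) V(2) by (cases "V i = UNIV") auto
      then show ?thesis using V(3) U(2) \<open>e \<in> D\<close> by blast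
    qed
    then show "\<exists>F. finite F \<and> (\<forall>e\<in>D. (\<forall>n\<in>F. e n = d n) \<longrightarrow> G e = G d)"
      using V(1) by blast
  qed
next
  assume loc: "\<forall>d\<in>D. \<exists>F. finite F \<and> (\<forall>e\<in>D. (\<forall>n\<in>F. e n = d n) \<longrightarrow> G e = G d)"
  have "openin (subtopology cantor D) {x \<in> D. G x \<in> W}" for W
  proof (subst openin_subopen, intro ballI)
    fix d assume d: "d \<in> {x \<in> D. G x \<in> W}"
    then obtain F where F: "finite F" "\<forall>e\<in>D. (\<forall>n\<in>F. e n = d n) \<longrightarrow> G e = G d"
      using loc by blast
    define V where "V n = (if n \<in> F then {d n} else UNIV)" for n
    have "openin cantor (Pi\<^sub>E UNIV V)"
      unfolding cantor_def
      by (rule product_topology_basis) (auto simp: V_def intro: finite_subset[OF _ F(1)])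
    then have "openin (subtopology cantor D) (Pi\<^sub>E UNIV V \<inter> D)"
      by (auto simp: openin_subtopology)
    moreover have "d \<in> Pi\<^sub>E UNIV V \<inter> D" using d by (auto simp: V_def)
    moreover have "Pi\<^sub>E UNIV V \<inter> D \<subseteq> {x \<in> D. G x \<in> W}"
      using F(2) d by (auto simp: V_def PiE_iff split: if_splits)
    ultimately show "\<exists>T. openin (subtopology cantor D) T \<and> d \<in> T \<and> T \<subseteq> {x \<in> D. G x \<in> W}"
      by blast
  qed
  then show "continuous_map (subtopology cantor D) (discrete_topology UNIV) G"
    by (simp add: continuous_map_def cantor_def)
qed

lemma iso_sym:
  assumes "iso S T"
  shows "iso T S"
proof -
  obtain f where f: "bij f" "\<forall>i xs. S i xs \<longleftrightarrow> T i (map f xs)" using assms iso_def by blast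
  have "T i ys \<longleftrightarrow> S i (map (inv f) ys)" for i ys
    using f by (simp add: bij_is_surj surj_f_inv_f comp_def)
  then show ?thesis unfolding iso_def using bij_imp_bij_inv[OF f(1)] by blast
qed

lemma iso_trans:
  assumes "iso S T" "iso T U"
  shows "iso S U"
proof -
  obtain f where f: "bij f" "\<forall>i xs. S i xs \<longleftrightarrow> T i (map f xs)" using assms iso_def by blast
  obtain g where g: "bij g" "\<forall>i xs. T i xs \<longleftrightarrow> U i (map g xs)" using assms iso_def by blast
  have "S i xs \<longleftrightarrow> U i (map (g \<circ> f) xs)" for i xs using f g by simp
  then show ?thesis unfolding iso_def using bij_comp[OF f(1) g(1)] by blast
qed

lemma family_iso_unique:
  assumes "family sig K" "A \<in> K" "B \<in> K" "iso A S" "iso B S"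
  shows "A = B"
  using assms unfolding family_def by (meson iso_sym iso_trans)

lemma LD_E:
  assumes "S \<in> LD sig K"
  obtains A where "A \<in> K" "iso A S"
  using assms unfolding LD_def by blast

definition iso_rep :: "str set \<Rightarrow> str \<Rightarrow> str" where
  "iso_rep K S = (THE A. A \<in> K \<and> iso A S)"

lemma iso_rep_eq:
  assumes "family sig K" "A \<in> K" "iso A S"
  shows "iso_rep K S = A"
  unfolding iso_rep_def using assms family_iso_unique[OF assms(1)] by blast

lemma LD_iso_iff_iso_rep_eq:
  assumes "family sig K" "S \<in> LD sig K" "S' \<in> LD sig K"
  shows "iso S S' \<longleftrightarrow> iso_rep K S = iso_rep K S'"
proof -
  obtain A where A: "A \<in> K" "iso A S" using assms(2) by (rule LD_E)
  obtain A' where A': "A' \<in> K" "iso A' S'" using assms(3) by (rule LD_E)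
  have "iso S S' \<longleftrightarrow> A = A'"
    using family_iso_unique[OF assms(1) A(1) A'(1)] A(2) A'(2) iso_sym iso_trans by metis
  then show ?thesis using iso_rep_eq[OF assms(1)] A A' by simp
qed

lemma restr_eq_iff:
  "restr T s = restr S s \<longleftrightarrow> (\<forall>i xs. (\<forall>x\<in>set xs. x \<le> s) \<longrightarrow> (T i xs \<longleftrightarrow> S i xs))"
  unfolding restr_def by (auto simp: fun_eq_iff)

lemma restr_eq_mono:
  assumes "restr T t = restr S t" "s \<le> t"
  shows "restr T s = restr S s"
  using assms unfolding restr_eq_iff by (meson order_trans)

fun atom_params :: "atom \<Rightarrow> nat set" where
  "atom_params (AEq x y) = {x, y}"
| "atom_params (ARel i xs) = set xs"

lemma restr_eq_imp_diag_eq_on_finite: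
  assumes "finite F"
  obtains s where "\<And>T S. restr T s = restr S s \<Longrightarrow> \<forall>n\<in>F. diag sig T n = diag sig S n"
proof
  define s where "s = Max (insert 0 (\<Union>n\<in>F. atom_params (from_nat n)))"
  have "finite (atom_params a)" for a by (cases a) auto
  then have params_le: "\<forall>x\<in>atom_params (from_nat n). x \<le> s" if "n \<in> F" for n
    unfolding s_def using assms that by (auto intro!: Max_ge)
  fix T S assume "restr T s = restr S s"
  then show "\<forall>n\<in>F. diag sig T n = diag sig S n"
    using params_le unfolding diag_def restr_eq_iff
    by (metis atom_params.elims holds.simps)
qed

definition restr_codes :: "nat list \<Rightarrow> nat \<Rightarrow> nat set" where
  "restr_codes sig s =
     to_nat ` (\<Union>i<length sig. ARel i ` {xs. set xs \<subseteq> {..s} \<and> length xs \<le> sig ! i})"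

lemma finite_restr_codes: "finite (restr_codes sig s)"
  unfolding restr_codes_def by (intro finite_imageI finite_UN_I finite_lists_length_le) auto

lemma diag_eq_on_restr_codes_imp_rel:
  assumes "is_str sig T" "\<forall>n\<in>restr_codes sig s. diag sig T n = diag sig S n"
    and "\<forall>x\<in>set xs. x \<le> s" "T i xs"
  shows "S i xs"
proof -
  have il: "i < length sig" "length xs = sig ! i" using assms(1,4) is_str_def by auto
  then have "to_nat (ARel i xs) \<in> restr_codes sig s"
    unfolding restr_codes_def using assms(3) by (intro imageI UN_I[of i]) auto
  then show ?thesis using assms(2,4) il by (force simp: diag_def is_atom_def)
qed

lemma diag_eq_on_restr_codes_imp_restr_eq:
  assumes "is_str sig T" "is_str sig S" "\<forall>n\<in>restr_codes sig s. diag sig T n = diag sig S n"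
  shows "restr T s = restr S s"
  unfolding restr_eq_iff
  using diag_eq_on_restr_codes_imp_rel[OF assms(1,3)] diag_eq_on_restr_codes_imp_rel[OF assms(2)]
    assms(3) by metis

lemma diag_inj:
  assumes "is_str sig T" "is_str sig S" "diag sig T = diag sig S"
  shows "T = S"
proof -
  have "T i xs = S i xs" for i xs
    using diag_eq_on_restr_codes_imp_restr_eq[OF assms(1,2), of "Max (insert 0 (set xs))"] assms(3)
    unfolding restr_eq_iff by (metis Max_ge finite_insert finite_set insertCI)
  then show ?thesis by (simp add: fun_eq_iff)
qed

subsection \<open>From finite learning to \<open>=\<^sub>\<nat>\<close>-learning\<close>

definition Fin_learns :: "nat list \<Rightarrow> str set \<Rightarrow> (nat \<times> str \<Rightarrow> str option) \<Rightarrow> bool" where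
  "Fin_learns sig K M \<longleftrightarrow> (\<forall>S \<in> LD sig K. \<exists>s0. (\<forall>t<s0. M (restr S t) = None) \<and>
     (\<exists>A\<in>K. iso A S \<and> (\<forall>t\<ge>s0. M (restr S t) = Some A)))"

lemma Fin_learns_committed_guess:
  assumes "Fin_learns sig K M" "S \<in> LD sig K" "M (restr S t) = Some A"
  shows "iso A S"
proof -
  obtain s0 B where B: "\<forall>t<s0. M (restr S t) = None" "iso B S" "\<forall>t\<ge>s0. M (restr S t) = Some B"
    using assms(1,2) unfolding Fin_learns_def by blast
  have "s0 \<le> t" using B(1) assms(3) by (metis leI option.distinct(1))
  then show "iso A S" using B(2,3) assms(3) by simp
qed

lemma Fin_learns_imp_eqN_learnable:
  assumes fam: "family sig K" and M: "Fin_learns sig K M"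
  shows "eqN_learnable sig K"
proof -
  define G where "G d = to_nat_on K (iso_rep K (inv_into (LD sig K) (diag sig) d))" for d
  have inj_diag: "inj_on (diag sig) (LD sig K)"
    by (rule inj_onI) (auto simp: LD_def intro: diag_inj)
  have G_diag: "G (diag sig S) = to_nat_on K (iso_rep K S)" if "S \<in> LD sig K" for S
    using that inj_diag by (simp add: G_def)
  have rep_in_K: "iso_rep K S \<in> K" if "S \<in> LD sig K" for S
    using that iso_rep_eq[OF fam] by (metis LD_E)
  have classifies: "iso S S' \<longleftrightarrow> G (diag sig S) = G (diag sig S')"
    if "S \<in> LD sig K" "S' \<in> LD sig K" for S S'
    using that LD_iso_iff_iso_rep_eq[OF fam] G_diag rep_in_K
      inj_on_to_nat_on[of K] fam unfolding family_def by (metis inj_on_eq_iff)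
  have "\<exists>F. finite F \<and> (\<forall>e\<in>diag sig ` LD sig K. (\<forall>n\<in>F. e n = diag sig S n) \<longrightarrow>
      G e = G (diag sig S))" if S: "S \<in> LD sig K" for S
  proof -
    obtain s0 A where A: "A \<in> K" "iso A S" "M (restr S s0) = Some A"
      using M S unfolding Fin_learns_def by blast
    have "G (diag sig T) = G (diag sig S)"
      if T: "T \<in> LD sig K" "\<forall>n\<in>restr_codes sig s0. diag sig T n = diag sig S n" for T
    proof -
      have "restr T s0 = restr S s0"
        using T S by (intro diag_eq_on_restr_codes_imp_restr_eq) (auto simp: LD_def)
      then have "M (restr T s0) = Some A" using A(3) by simp
      then have "iso A T" by (rule Fin_learns_committed_guess[OF M T(1)])
      then show ?thesis using G_diag T(1) S iso_rep_eq[OF fam A(1)] A(2) by simp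
    qed
    then show ?thesis using finite_restr_codes by blast
  qed
  then have "continuous_map (subtopology cantor (diag sig ` LD sig K)) (discrete_topology UNIV) G"
    unfolding continuous_map_cantor_discrete_iff by blast
  then show ?thesis unfolding eqN_learnable_def using classifies by blast
qed

subsection \<open>From \<open>=\<^sub>\<nat>\<close>-learning to finite learning\<close>

text \<open>The middle conjunct keeps data that no structure of the learning domain extends
  from forcing every A vacuously.\<close>
definition forces :: "nat list \<Rightarrow> str set \<Rightarrow> nat \<times> str \<Rightarrow> str \<Rightarrow> bool" where
  "forces sig K \<sigma> A \<longleftrightarrow> A \<in> K \<and> (\<exists>T\<in>LD sig K. restr T (fst \<sigma>) = \<sigma>) \<and>
     (\<forall>T\<in>LD sig K. restr T (fst \<sigma>) = \<sigma> \<longrightarrow> iso A T)"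

definition forcing_learner :: "nat list \<Rightarrow> str set \<Rightarrow> nat \<times> str \<Rightarrow> str option" where
  "forcing_learner sig K \<sigma> =
     (if \<exists>A. forces sig K \<sigma> A then Some (SOME A. forces sig K \<sigma> A) else None)"

lemma fst_restr [simp]: "fst (restr S s) = s"
  by (simp add: restr_def)

lemma forces_restr_iff:
  assumes "family sig K" "S \<in> LD sig K" "A \<in> K" "iso A S"
  shows "forces sig K (restr S t) B \<longleftrightarrow>
    B = A \<and> (\<forall>T\<in>LD sig K. restr T t = restr S t \<longrightarrow> iso A T)"
  using assms family_iso_unique[OF assms(1)] unfolding forces_def by auto

lemma forcing_learner_restr:
  assumes "family sig K" "S \<in> LD sig K" "A \<in> K" "iso A S"
  shows "forcing_learner sig K (restr S t) =
    (if \<forall>T\<in>LD sig K. restr T t = restr S t \<longrightarrow> iso A T then Some A else None)"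
  using forces_restr_iff[OF assms] unfolding forcing_learner_def by auto

lemma eqN_learnable_imp_forcing_learner:
  assumes fam: "family sig K" and "eqN_learnable sig K"
  shows "Fin_learns sig K (forcing_learner sig K)"
  unfolding Fin_learns_def
proof
  fix S assume S: "S \<in> LD sig K"
  obtain G :: "(nat \<Rightarrow> bool) \<Rightarrow> nat" where
    cont: "continuous_map (subtopology cantor (diag sig ` LD sig K)) (discrete_topology UNIV) G" and
    classifies: "\<forall>S\<in>LD sig K. \<forall>S'\<in>LD sig K. iso S S' \<longleftrightarrow> G (diag sig S) = G (diag sig S')"
    using assms(2) unfolding eqN_learnable_def by blast
  obtain A where A: "A \<in> K" "iso A S" using S by (rule LD_E)
  define forced where "forced t \<longleftrightarrow> (\<forall>T\<in>LD sig K. restr T t = restr S t \<longrightarrow> iso A T)" for t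
  obtain F where F: "finite F"
    "\<forall>e\<in>diag sig ` LD sig K. (\<forall>n\<in>F. e n = diag sig S n) \<longrightarrow> G e = G (diag sig S)"
    using cont S unfolding continuous_map_cantor_discrete_iff by blast
  obtain s where s: "\<And>T S. restr T s = restr S s \<Longrightarrow> \<forall>n\<in>F. diag sig T n = diag sig S n"
    using restr_eq_imp_diag_eq_on_finite[OF F(1), where sig=sig] by blast
  have "forced s"
    unfolding forced_def
  proof (intro ballI impI)
    fix T assume T: "T \<in> LD sig K" "restr T s = restr S s"
    then have "G (diag sig T) = G (diag sig S)" using F(2) s[OF T(2)] by blast
    then have "iso S T" using classifies S T(1) by simp
    with A(2) show "iso A T" by (rule iso_trans)
  qed
  have forced_mono: "forced t" if "forced t0" "t0 \<le> t" for t0 t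
    using that restr_eq_mono unfolding forced_def by blast
  define s0 where "s0 = (LEAST t. forced t)"
  have "forced s0"
    unfolding s0_def using \<open>forced s\<close> by (rule LeastI)
  then have "forced t \<longleftrightarrow> s0 \<le> t" for t
    using forced_mono Least_le[of forced t] unfolding s0_def by blast
  then have "forcing_learner sig K (restr S t) = (if s0 \<le> t then Some A else None)" for t
    using forcing_learner_restr[OF fam S A] unfolding forced_def by simp
  then show "\<exists>s0. (\<forall>t<s0. forcing_learner sig K (restr S t) = None) \<and>
      (\<exists>A\<in>K. iso A S \<and> (\<forall>t\<ge>s0. forcing_learner sig K (restr S t) = Some A))"
    using A by (intro exI[of _ s0]) auto
qed

lemma forcing_learner_range:
  "forcing_learner sig K \<sigma> = None \<or> (\<exists>A\<in>K. forcing_learner sig K \<sigma> = Some A)"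
proof (cases "\<exists>A. forces sig K \<sigma> A")
  case True
  then have "(SOME A. forces sig K \<sigma> A) \<in> K"
    using someI_ex[OF True] forces_def by metis
  then show ?thesis using True unfolding forcing_learner_def by auto
qed (simp add: forcing_learner_def)

theorem mainTheorem3:
  fixes sig :: "nat list" and K :: "str set"
  assumes "family sig K"
  shows "Fin_learnable sig K \<longleftrightarrow> eqN_learnable sig K"
proof
  assume "Fin_learnable sig K"
  then obtain M where "Fin_learns sig K M"
    unfolding Fin_learnable_def Fin_learns_def by blast
  then show "eqN_learnable sig K"
    by (rule Fin_learns_imp_eqN_learnable[OF assms])
next
  assume "eqN_learnable sig K"
  then have "Fin_learns sig K (forcing_learner sig K)"
    by (rule eqN_learnable_imp_forcing_learner[OF assms])
  then show "Fin_learnable sig K"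
    unfolding Fin_learnable_def Fin_learns_def
    by (intro exI[of _ "forcing_learner sig K"] conjI allI impI forcing_learner_range)
qed

end
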